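(* Let $n$ and $r$ be positive integers with $n\geq (r^2+r)/2$. Then $b(\mathrm{S}_{n,r})=\left\lceil\frac{2n-2}{r+1}\right\rceil$.
   Context: $\mathrm{S}_{n,r}$ denotes the symmetric group $\mathrm{S}_n$ acting naturally on the set of $r$-element subsets of $[n]=\{1,\dots,n\}$. For a permutation group $G$ on a set $\Omega$, $b(G)$ is the minimum size of a subset of $\Omega$ whose pointwise stabiliser in $G$ is trivial. *)

theory Defs
  imports "HOL-Combinatorics.Permutations" Complex_Main
begin

definition rsubsets :: "nat \<Rightarrow> nat \<Rightarrow> nat set set" where
  "rsubsets n r = {A. A \<subseteq> {1..n} \<and> card A = r}"

definition is_base_Snr :: "nat \<Rightarrow> nat \<Rightarrow> nat set set \<Rightarrow> bool" where
  "is_base_Snr n r B \<longleftrightarrow> B \<subseteq> rsubsets n r \<and>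
     (\<forall>\<sigma>. \<sigma> permutes {1..n} \<and> (\<forall>A\<in>B. \<sigma> ` A = A) \<longrightarrow> \<sigma> = id)"

definition base_size_Snr :: "nat \<Rightarrow> nat \<Rightarrow> nat" where
  "base_size_Snr n r = (LEAST k. \<exists>B. is_base_Snr n r B \<and> card B = k)"

end

theory Submission
  imports Defs
begin

text \<open>
  A set B of r-subsets of [n] is a base exactly when the map sending a point x to the set of
  members of B containing x is injective. Then at most one point lies in no member and at most
  |B| points lie in exactly one member, so double counting gives 2n \<le> |B|(r + 1) + 2.

  Conversely, let Q be a family of n distinct subsets of a k-set in which every point lies in
  exactly r members. Labelling [n] by the members of Q, each of the k points yields the r-set of
  labels of the members containing it, and these k sets form a base. For
  k = \<lceil>(2n - 2)/(r + 1)\<rceil> such a family is built from the empty set, singletons and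
  the edges of a circulant graph (plus a near-matching when r is even and k odd), and then cut
  down to exactly n members by deleting the empty set or merging several singletons into one
  set. The hypothesis n \<ge> (r^2 + r)/2 ensures k \<ge> r, which the circulant needs.
\<close>

lemma sum_card_eq_sum_card_containing:
  assumes "finite V" "finite P" "\<forall>A\<in>P. A \<subseteq> V"
  shows "(\<Sum>A\<in>P. card A) = (\<Sum>x\<in>V. card {A\<in>P. x \<in> A})"
proof -
  have "(\<Sum>A\<in>P. card A) = (\<Sum>A\<in>P. card {x\<in>V. x \<in> A})"
    using assms(3) by (intro sum.cong) (auto intro: arg_cong[where f = card])
  also have "\<dots> = (\<Sum>x\<in>V. card {A\<in>P. x \<in> A})"
    unfolding card_eq_sum by (rule sum.swap_restrict[OF assms(2,1)])
  finally show ?thesis .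
qed

lemma is_base_Snr_inj_on_containing:
  assumes "is_base_Snr n r B"
  shows "inj_on (\<lambda>x. {A\<in>B. x \<in> A}) {1..n}"
proof (rule inj_onI, rule ccontr)
  fix x y
  assume xy: "x \<in> {1..n}" "y \<in> {1..n}" "{A\<in>B. x \<in> A} = {A\<in>B. y \<in> A}" "x \<noteq> y"
  then have "\<forall>A\<in>B. x \<in> A \<longleftrightarrow> y \<in> A"
    by blast
  then have "\<forall>A\<in>B. transpose x y ` A = A"
    by simp
  moreover have "transpose x y permutes {1..n}"
    using xy by (intro permutes_swap_id)
  ultimately have "transpose x y = id"
    using assms unfolding is_base_Snr_def by blast
  with xy(4) show False
    by (simp add: transpose_eq_id_iff)
qed

lemma two_card_le_sum_card_inj_on:
  assumes "finite B" "finite V" "inj_on f V" "\<forall>x\<in>V. f x \<subseteq> B"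
  shows "2 * card V \<le> (\<Sum>x\<in>V. card (f x)) + card B + 2"
proof -
  define V0 where "V0 = {x\<in>V. f x = {}}"
  define V1 where "V1 = {x\<in>V. card (f x) = 1}"
  have "f ` V0 \<subseteq> {{}}"
    by (auto simp: V0_def)
  then have "card (f ` V0) \<le> 1"
    using subset_singletonD by fastforce
  moreover have "card (f ` V0) = card V0"
    using assms(3) by (intro card_image) (auto simp: V0_def intro: inj_on_subset)
  ultimately have V0: "card V0 \<le> 1"
    by simp
  have "card V1 = card (f ` V1)"
    using assms(3) by (intro card_image[symmetric]) (auto simp: V1_def intro: inj_on_subset)
  also have "\<dots> \<le> card ((\<lambda>b. {b}) ` B)"
    using assms(1,4) by (intro card_mono) (auto simp: V1_def card_Suc_eq)
  also have "\<dots> \<le> card B"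
    using assms(1) by (rule card_image_le)
  finally have V1: "card V1 \<le> card B" .
  have "2 \<le> card (f x) + 2 * (if x \<in> V0 then 1 else 0) + (if x \<in> V1 then 1 else 0)" if "x \<in> V" for x
  proof -
    have "card (f x) = 0 \<longleftrightarrow> x \<in> V0"
      using that finite_subset[OF assms(4)[rule_format, OF that] assms(1)] by (simp add: V0_def)
    moreover have "card (f x) = 1 \<longleftrightarrow> x \<in> V1"
      using that by (simp add: V1_def)
    ultimately show ?thesis
      by (cases "x \<in> V0"; cases "x \<in> V1") auto
  qed
  then have "(\<Sum>x\<in>V. 2) \<le> (\<Sum>x\<in>V. card (f x) + 2 * (if x \<in> V0 then 1 else 0) + (if x \<in> V1 then 1 else 0))"
    by (rule sum_mono)
  also have "\<dots> = (\<Sum>x\<in>V. card (f x)) + 2 * card V0 + card V1"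
    using assms(2) by (simp add: sum.distrib sum_distrib_left[symmetric] V0_def V1_def sum.If_cases Int_def)
  finally show ?thesis
    using V0 V1 by simp
qed

lemma is_base_Snr_card_lower_bound:
  assumes "is_base_Snr n r B"
  shows "2 * n \<le> card B * (r + 1) + 2"
proof -
  have B: "\<forall>A\<in>B. A \<subseteq> {1..n} \<and> card A = r"
    using assms unfolding is_base_Snr_def rsubsets_def by (simp add: subset_iff)
  then have "B \<subseteq> Pow {1..n}"
    by blast
  then have "finite B"
    by (rule finite_subset) simp
  have "2 * n \<le> (\<Sum>x\<in>{1..n}. card {A\<in>B. x \<in> A}) + card B + 2"
    using two_card_le_sum_card_inj_on[OF \<open>finite B\<close> _ is_base_Snr_inj_on_containing[OF assms]]
    by simp
  also have "(\<Sum>x\<in>{1..n}. card {A\<in>B. x \<in> A}) = (\<Sum>A\<in>B. card A)"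
    using B \<open>finite B\<close> by (intro sum_card_eq_sum_card_containing[symmetric]) auto
  also have "\<dots> = card B * r"
    using B by simp
  finally show ?thesis
    by (simp add: distrib_left)
qed

definition regular_family :: "nat \<Rightarrow> nat \<Rightarrow> nat set set \<Rightarrow> bool" where
  "regular_family k r Q \<longleftrightarrow> Q \<subseteq> Pow {..<k} \<and> (\<forall>x<k. card {A\<in>Q. x \<in> A} = r)"

lemma regular_family_finite: "regular_family k r Q \<Longrightarrow> finite Q"
  unfolding regular_family_def by (meson finite_Pow_iff finite_lessThan finite_subset)

lemma is_base_Snr_of_regular_family:
  assumes Q: "regular_family k r Q" and "card Q = n"
  shows "\<exists>B. is_base_Snr n r B \<and> card B \<le> k"
proof -
  obtain g where g: "bij_betw g {1..n} Q"
    using finite_same_card_bij[OF _ regular_family_finite[OF Q]] \<open>card Q = n\<close> by force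
  define col where "col j = {z\<in>{1..n}. j \<in> g z}" for j
  define B where "B = col ` {..<k}"
  have "card (col j) = r" if "j < k" for j
  proof -
    have "inj_on g (col j)"
      using bij_betw_imp_inj_on[OF g] by (rule inj_on_subset) (auto simp: col_def)
    then have "card (col j) = card (g ` col j)"
      by (rule card_image[symmetric])
    also have "g ` col j = {A\<in>Q. j \<in> A}"
      using g unfolding col_def bij_betw_def by auto
    finally show ?thesis
      using Q that unfolding regular_family_def by simp
  qed
  then have "B \<subseteq> rsubsets n r"
    unfolding B_def rsubsets_def col_def by auto
  moreover have "\<sigma> = id" if \<sigma>: "\<sigma> permutes {1..n}" and stab: "\<forall>C\<in>B. \<sigma> ` C = C" for \<sigma>
  proof
    fix z
    show "\<sigma> z = id z"
    proof (cases "z \<in> {1..n}")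
      case False
      then show ?thesis
        using \<sigma> by (simp add: permutes_not_in)
    next
      case True
      then have \<sigma>z: "\<sigma> z \<in> {1..n}"
        using \<sigma> by (metis permutes_in_image)
      have same: "j \<in> g z \<longleftrightarrow> j \<in> g (\<sigma> z)" if "j < k" for j
      proof -
        have "j \<in> g z \<longleftrightarrow> \<sigma> z \<in> \<sigma> ` col j"
          using True permutes_inj[OF \<sigma>] by (simp add: col_def inj_image_mem_iff)
        also have "\<sigma> ` col j = col j"
          using stab that unfolding B_def by blast
        finally show ?thesis
          using \<sigma>z by (simp add: col_def)
      qed
      have "g z \<in> Q" "g (\<sigma> z) \<in> Q"
        using g True \<sigma>z by (auto intro: bij_betw_apply)
      then have "g z \<subseteq> {..<k}" "g (\<sigma> z) \<subseteq> {..<k}"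
        using Q unfolding regular_family_def by auto
      with same have "g (\<sigma> z) = g z"
        by (intro set_eqI) (metis lessThan_iff subsetD)
      then show ?thesis
        using bij_betw_imp_inj_on[OF g] True \<sigma>z by (simp add: inj_on_eq_iff)
    qed
  qed
  ultimately have "is_base_Snr n r B"
    unfolding is_base_Snr_def by blast
  moreover have "card B \<le> k"
    unfolding B_def using card_image_le[of "{..<k}" col] by simp
  ultimately show ?thesis
    by blast
qed

lemma sum_card_regular_family:
  assumes "regular_family k r Q"
  shows "(\<Sum>A\<in>Q. card A) = k * r"
proof -
  have "(\<Sum>A\<in>Q. card A) = (\<Sum>x\<in>{..<k}. card {A\<in>Q. x \<in> A})"
    using assms regular_family_finite[OF assms] unfolding regular_family_def
    by (intro sum_card_eq_sum_card_containing) auto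
  also have "\<dots> = k * r"
    using assms unfolding regular_family_def by simp
  finally show ?thesis .
qed

lemma regular_family_Diff_empty:
  "regular_family k r Q \<Longrightarrow> regular_family k r (Q - {{}})"
  unfolding regular_family_def by (auto intro: arg_cong[where f = card])

definition merge_singletons :: "nat set set \<Rightarrow> nat set \<Rightarrow> nat set set" where
  "merge_singletons Q X = insert X (Q - (\<lambda>x. {x}) ` X)"

lemma regular_family_merge_singletons:
  assumes Q: "regular_family k r Q" and X: "X \<subseteq> {..<k}" "\<forall>x\<in>X. {x} \<in> Q" "X \<notin> Q"
  shows "regular_family k r (merge_singletons Q X)"
  unfolding regular_family_def
proof (intro conjI allI impI)
  show "merge_singletons Q X \<subseteq> Pow {..<k}"
    using Q X unfolding regular_family_def merge_singletons_def by auto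
next
  fix y
  assume "y < k"
  have fin: "finite {A\<in>Q. y \<in> A}"
    using regular_family_finite[OF Q] by simp
  show "card {A\<in>merge_singletons Q X. y \<in> A} = r"
  proof (cases "y \<in> X")
    case True
    then have "{A\<in>merge_singletons Q X. y \<in> A} = insert X ({A\<in>Q. y \<in> A} - {{y}})"
      unfolding merge_singletons_def by auto
    then have "card {A\<in>merge_singletons Q X. y \<in> A} = Suc (card {A\<in>Q. y \<in> A} - 1)"
      using fin X True by (simp add: card_Diff_singleton)
    also have "\<dots> = card {A\<in>Q. y \<in> A}"
      using fin X(2) True by (intro Suc_diff_1) (auto simp: card_gt_0_iff)
    finally show ?thesis
      using Q \<open>y < k\<close> unfolding regular_family_def by simp
  next
    case False
    then have "{A\<in>merge_singletons Q X. y \<in> A} = {A\<in>Q. y \<in> A}"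
      unfolding merge_singletons_def by auto
    then show ?thesis
      using Q \<open>y < k\<close> unfolding regular_family_def by simp
  qed
qed

lemma card_merge_singletons:
  assumes "finite Q" "finite X" "\<forall>x\<in>X. {x} \<in> Q" "X \<notin> Q"
  shows "card (merge_singletons Q X) + card X = card Q + 1"
proof -
  have "card ((\<lambda>x. {x}) ` X) = card X"
    by (rule card_image) (simp add: inj_on_def)
  moreover have "(\<lambda>x. {x}) ` X \<subseteq> Q"
    using assms(3) by auto
  moreover from calculation have "card X \<le> card Q"
    using assms(1) by (metis card_mono)
  ultimately show ?thesis
    using assms unfolding merge_singletons_def
    by (simp add: card_Diff_subset)
qed

lemma regular_family_shrink:
  assumes Q: "regular_family k r Q" "{} \<in> Q" "\<forall>A\<in>Q. card A \<le> 2"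
    and S: "S \<subseteq> {..<k}" "\<forall>x\<in>S. {x} \<in> Q"
    and n: "n \<le> card Q" "card Q \<le> n + 1 \<or> card Q < n + card S"
  shows "\<exists>Q'. regular_family k r Q' \<and> card Q' = n"
proof -
  have "finite Q"
    using Q(1) by (rule regular_family_finite)
  consider "card Q = n" | "card Q = n + 1" | "n + 2 \<le> card Q" "card Q < n + card S"
    using n by linarith
  then show ?thesis
  proof cases
    case 1
    with Q(1) show ?thesis by blast
  next
    case 2
    then have "card (Q - {{}}) = n"
      using Q(2) \<open>finite Q\<close> by simp
    with regular_family_Diff_empty[OF Q(1)] show ?thesis by blast
  next
    case 3
    then have "card Q - n + 1 \<le> card S"
      by linarith
    then obtain X where X: "X \<subseteq> S" "card X = card Q - n + 1" "finite X"
      by (rule obtain_subset_with_card_n)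
    then have "X \<notin> Q"
      using Q(3) 3 by fastforce
    then have "regular_family k r (merge_singletons Q X)"
      and "card (merge_singletons Q X) + card X = card Q + 1"
      using regular_family_merge_singletons[OF Q(1)] card_merge_singletons[OF \<open>finite Q\<close> \<open>finite X\<close>]
        X S by auto
    moreover from this(2) have "card (merge_singletons Q X) = n"
      using X(2) 3 by linarith
    ultimately show ?thesis
      by blast
  qed
qed

locale simple_graph =
  fixes k :: nat and adj :: "nat \<Rightarrow> nat \<Rightarrow> bool"
  assumes adj_less: "adj x y \<Longrightarrow> x < k \<and> y < k"
    and adj_irrefl: "\<not> adj x x"
    and adj_sym: "adj x y \<Longrightarrow> adj y x"

definition graph_family :: "nat set \<Rightarrow> (nat \<Rightarrow> nat \<Rightarrow> bool) \<Rightarrow> nat set set" where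
  "graph_family S adj = insert {} ((\<lambda>x. {x}) ` S \<union> {{x, y} |x y. adj x y})"

lemma graph_family_card_le_2: "A \<in> graph_family S adj \<Longrightarrow> card A \<le> 2"
  unfolding graph_family_def by (auto simp: card_insert_if)

context simple_graph
begin

lemma finite_neighbours: "finite {y. adj x y}"
  by (rule finite_subset[of _ "{..<k}"]) (use adj_less in auto)

lemma card_graph_family_containing:
  "card {A\<in>graph_family S adj. x \<in> A} = of_bool (x \<in> S) + card {y. adj x y}"
proof -
  let ?S = "if x \<in> S then {{x}} else {}"
  have "{A\<in>graph_family S adj. x \<in> A} = ?S \<union> (\<lambda>y. {x, y}) ` {y. adj x y}"
    unfolding graph_family_def using adj_sym by (auto simp: doubleton_eq_iff insert_commute)
  moreover have "?S \<inter> (\<lambda>y. {x, y}) ` {y. adj x y} = {}"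
    using adj_irrefl by (auto simp: doubleton_eq_iff)
  moreover have "inj_on (\<lambda>y. {x, y}) {y. adj x y}"
    using adj_irrefl by (auto simp: inj_on_def doubleton_eq_iff)
  ultimately show ?thesis
    using finite_neighbours by (simp add: card_Un_disjoint card_image)
qed

lemma regular_graph_family:
  assumes "S \<subseteq> {..<k}" and "\<forall>x<k. of_bool (x \<in> S) + card {y. adj x y} = r"
  shows "regular_family k r (graph_family S adj)"
  using assms adj_less card_graph_family_containing
  unfolding regular_family_def graph_family_def by auto

lemma card_regular_graph_family:
  assumes "S \<subseteq> {..<k}" and "regular_family k r (graph_family S adj)"
  shows "2 * card (graph_family S adj) = 2 + card S + k * r"
proof -
  let ?E = "{{x, y} |x y. adj x y}"
  let ?V = "(\<lambda>x. {x}) ` S"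
  have "finite ?E"
    by (rule finite_subset[of _ "Pow {..<k}"]) (use adj_less in auto)
  moreover have "finite ?V"
    using assms(1) finite_subset by blast
  moreover have E2: "\<forall>A\<in>?E. card A = 2"
    using adj_irrefl by (fastforce simp: card_insert_if)
  moreover have "?V \<inter> ?E = {}" "{} \<notin> ?V \<union> ?E"
    using adj_irrefl by auto
  moreover have "card ?V = card S" "(\<Sum>A\<in>?V. card A) = card S"
    by (simp_all add: card_image sum.reindex inj_on_def)
  ultimately have "card (graph_family S adj) = 1 + card S + card ?E"
    and "(\<Sum>A\<in>graph_family S adj. card A) = card S + 2 * card ?E"
    unfolding graph_family_def by (simp_all add: card_Un_disjoint sum.union_disjoint)
  then show ?thesis
    using sum_card_regular_family[OF assms(2)] by simp
qed

end

lemma add_mod_eq_if: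
  fixes x d k :: nat
  assumes "x < k" "d < k"
  shows "(x + d) mod k = (if x + d < k then x + d else x + d - k)"
  using assms by (simp add: le_mod_geq)

definition circulant :: "nat \<Rightarrow> nat set \<Rightarrow> nat \<Rightarrow> nat \<Rightarrow> bool" where
  "circulant k D x y \<longleftrightarrow> x < k \<and> y < k \<and> (\<exists>d\<in>D. y = (x + d) mod k)"

lemma simple_graph_circulant:
  assumes D: "D \<subseteq> {1..<k}" "\<forall>d\<in>D. k - d \<in> D"
  shows "simple_graph k (circulant k D)"
proof
  fix x y
  show "circulant k D x y \<Longrightarrow> x < k \<and> y < k"
    by (simp add: circulant_def)
  show "\<not> circulant k D x x"
    using D(1) by (auto simp: circulant_def add_mod_eq_if split: if_splits)
  assume "circulant k D x y"
  then obtain d where d: "d \<in> D" "x < k" "y < k" "y = (x + d) mod k"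
    unfolding circulant_def by blast
  with D(1) have "x = (y + (k - d)) mod k"
    by (auto simp: add_mod_eq_if)
  with d D(2) show "circulant k D y x"
    unfolding circulant_def by blast
qed

lemma card_circulant_neighbours:
  assumes "D \<subseteq> {1..<k}" "x < k"
  shows "card {y. circulant k D x y} = card D"
proof -
  have "{y. circulant k D x y} = (\<lambda>d. (x + d) mod k) ` D"
    using assms unfolding circulant_def by auto
  moreover have "inj_on (\<lambda>d. (x + d) mod k) D"
  proof (rule inj_onI)
    fix d d'
    assume "d \<in> D" "d' \<in> D" "(x + d) mod k = (x + d') mod k"
    moreover from calculation have "d < k" "d' < k"
      using assms(1) by auto
    ultimately show "d = d'"
      using assms(2) by (auto simp: add_mod_eq_if split: if_splits)
  qed
  ultimately show ?thesis
    by (simp add: card_image)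
qed

definition steps_upto :: "nat \<Rightarrow> nat \<Rightarrow> nat set" where
  "steps_upto k t = {1..t} \<union> {k - t..<k}"

lemma steps_upto_subset: "2 * t < k \<or> t = 0 \<Longrightarrow> steps_upto k t \<subseteq> {1..<k}"
  unfolding steps_upto_def by auto

lemma steps_upto_sym: "2 * t < k \<or> t = 0 \<Longrightarrow> \<forall>d\<in>steps_upto k t. k - d \<in> steps_upto k t"
  unfolding steps_upto_def by auto

lemma card_steps_upto: "2 * t < k \<or> t = 0 \<Longrightarrow> card (steps_upto k t) = 2 * t"
  unfolding steps_upto_def by (subst card_Un_disjoint) auto

text \<open>
  Every edge joins vertices at cyclic distance m modulo 2m + 1, so these edges avoid any
  circulant graph with steps below m.
\<close>
definition hub_matching :: "nat \<Rightarrow> nat \<Rightarrow> nat \<Rightarrow> bool" where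
  "hub_matching m x y \<longleftrightarrow>
     (x = 0 \<and> (y = m \<or> y = m + 1)) \<or> (y = 0 \<and> (x = m \<or> x = m + 1)) \<or>
     (1 \<le> x \<and> x < m \<and> y = x + m + 1) \<or> (1 \<le> y \<and> y < m \<and> x = y + m + 1)"

lemma simple_graph_hub_matching: "1 \<le> m \<Longrightarrow> simple_graph (2 * m + 1) (hub_matching m)"
  by unfold_locales (auto simp: hub_matching_def)

lemma card_hub_matching_neighbours:
  assumes "1 \<le> m" "x < 2 * m + 1"
  shows "card {y. hub_matching m x y} = (if x = 0 then 2 else 1)"
proof -
  consider "x = 0" | "x = m \<or> x = m + 1" "x \<noteq> 0" | "1 \<le> x" "x < m" | "m + 2 \<le> x"
    using assms by linarith
  then show ?thesis
  proof cases
    case 1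
    with assms have "{y. hub_matching m x y} = {m, m + 1}"
      unfolding hub_matching_def by auto
    with 1 show ?thesis by simp
  next
    case 2
    then have "{y. hub_matching m x y} = {0}"
      unfolding hub_matching_def by auto
    with 2 show ?thesis by simp
  next
    case 3
    then have "{y. hub_matching m x y} = {x + m + 1}"
      unfolding hub_matching_def by auto
    with 3 show ?thesis by simp
  next
    case 4
    then have "{y. hub_matching m x y} = {x - m - 1}"
      using assms unfolding hub_matching_def by auto
    with 4 show ?thesis by simp
  qed
qed

lemma hub_matching_not_circulant:
  assumes "t < m" "hub_matching m x y"
  shows "\<not> circulant (2 * m + 1) (steps_upto (2 * m + 1) t) x y"
proof
  assume "circulant (2 * m + 1) (steps_upto (2 * m + 1) t) x y"
  then obtain d where "d \<in> steps_upto (2 * m + 1) t" "x < 2 * m + 1" "y = (x + d) mod (2 * m + 1)"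
    unfolding circulant_def by blast
  moreover from calculation have "d < 2 * m + 1"
    using assms(1) steps_upto_subset[of t "2 * m + 1"] by auto
  ultimately have "y = (if x + d < 2 * m + 1 then x + d else x + d - (2 * m + 1))"
    "d \<le> t \<or> 2 * m + 1 - t \<le> d" "d < 2 * m + 1"
    by (auto simp: add_mod_eq_if steps_upto_def)
  then show False
    using assms unfolding hub_matching_def by (auto split: if_splits)
qed

lemma simple_graph_disj:
  "simple_graph k adj \<Longrightarrow> simple_graph k adj' \<Longrightarrow> simple_graph k (\<lambda>x y. adj x y \<or> adj' x y)"
  unfolding simple_graph_def by blast

lemma circulant_hub_matching:
  assumes k: "k = 2 * m + 1" and "t < m"
  defines "adj \<equiv> \<lambda>x y. circulant k (steps_upto k t) x y \<or> hub_matching m x y"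
  shows "simple_graph k adj"
    and "x < k \<Longrightarrow> card {y. adj x y} = 2 * t + (if x = 0 then 2 else 1)"
proof -
  have t: "2 * t < k \<or> t = 0"
    using assms(1,2) by simp
  interpret C: simple_graph k "circulant k (steps_upto k t)"
    by (rule simple_graph_circulant[OF steps_upto_subset[OF t] steps_upto_sym[OF t]])
  interpret H: simple_graph k "hub_matching m"
    using k \<open>t < m\<close> simple_graph_hub_matching[of m] by simp
  show "simple_graph k adj"
    unfolding adj_def by (rule simple_graph_disj) unfold_locales
  assume x: "x < k"
  have "{y. adj x y} = {y. circulant k (steps_upto k t) x y} \<union> {y. hub_matching m x y}"
    unfolding adj_def by blast
  moreover have "{y. circulant k (steps_upto k t) x y} \<inter> {y. hub_matching m x y} = {}"
    using hub_matching_not_circulant[OF \<open>t < m\<close>] k by blast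
  ultimately have "card {y. adj x y} = card {y. circulant k (steps_upto k t) x y} + card {y. hub_matching m x y}"
    using C.finite_neighbours H.finite_neighbours by (simp add: card_Un_disjoint)
  also have "\<dots> = 2 * t + (if x = 0 then 2 else 1)"
    using card_circulant_neighbours[OF steps_upto_subset[OF t] x] card_steps_upto[OF t]
      card_hub_matching_neighbours[of m x] x k \<open>t < m\<close> by simp
  finally show "card {y. adj x y} = 2 * t + (if x = 0 then 2 else 1)" .
qed

lemma exists_graph_with_degrees:
  assumes "0 < r" "r = 1 \<or> r \<le> k"
  shows "\<exists>S adj. simple_graph k adj \<and> S \<subseteq> {..<k} \<and> k \<le> card S + 1 \<and>
    (\<forall>x<k. of_bool (x \<in> S) + card {y. adj x y} = r)"
proof (cases "odd r")
  case True
  then obtain t where r: "r = 2 * t + 1"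
    by (metis oddE)
  with assms have t: "2 * t < k \<or> t = 0"
    by auto
  show ?thesis
    using simple_graph_circulant[OF steps_upto_subset[OF t] steps_upto_sym[OF t]]
      card_circulant_neighbours[OF steps_upto_subset[OF t]] card_steps_upto[OF t] r
    by (intro exI[of _ "{..<k}"] exI[of _ "circulant k (steps_upto k t)"]) auto
next
  case False
  define t where "t = r div 2 - 1"
  have r: "r = 2 * t + 2"
    using False assms(1) unfolding t_def by presburger
  with assms have t: "2 * t + 2 \<le> k"
    by auto
  then have t': "2 * t < k \<or> t = 0"
    by simp
  show ?thesis
  proof (cases "even k")
    case True
    define D where "D = insert (k div 2) (steps_upto k t)"
    have "k div 2 \<notin> steps_upto k t"
      using t True unfolding steps_upto_def by auto
    then have D: "D \<subseteq> {1..<k}" "\<forall>d\<in>D. k - d \<in> D" "card D = 2 * t + 1"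
      using steps_upto_subset[OF t'] steps_upto_sym[OF t'] card_steps_upto[OF t'] t True
      unfolding D_def by (auto simp: finite_subset)
    show ?thesis
      using simple_graph_circulant[OF D(1,2)] card_circulant_neighbours[OF D(1)] D(3) r
      by (intro exI[of _ "{..<k}"] exI[of _ "circulant k D"]) auto
  next
    case False
    then obtain m where k: "k = 2 * m + 1"
      by (metis oddE)
    with t have "t < m"
      by simp
    show ?thesis
      using circulant_hub_matching[OF k \<open>t < m\<close>] r k
      by (intro exI[of _ "{1..<k}"] exI) auto
  qed
qed

lemma exists_regular_family_card:
  assumes "0 < r" "r = 1 \<or> r \<le> k" "2 * n \<le> k * (r + 1) + 2" "k * (r + 1) + 2 \<le> 2 * n + r"
  shows "\<exists>Q. regular_family k r Q \<and> card Q = n"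
proof -
  obtain S adj where G: "simple_graph k adj" and S: "S \<subseteq> {..<k}" "k \<le> card S + 1"
    and deg: "\<forall>x<k. of_bool (x \<in> S) + card {y. adj x y} = r"
    using exists_graph_with_degrees[OF assms(1,2)] by blast
  interpret simple_graph k adj
    by (rule G)
  let ?Q = "graph_family S adj"
  have Q: "regular_family k r ?Q"
    using S(1) deg by (rule regular_graph_family)
  have "2 * card ?Q = 2 + card S + k * r"
    using S(1) Q by (rule card_regular_graph_family)
  moreover have "card S \<le> k"
    using card_mono[OF _ S(1)] by simp
  ultimately have "2 * n \<le> 2 * card ?Q + 1" "2 * card ?Q \<le> 2 * n + r"
    using S(2) assms(3,4) by (simp_all add: algebra_simps)
  moreover have "card ?Q < n + card S" if "n + 2 \<le> card ?Q"
    using that calculation S(2) assms(2) by linarith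
  ultimately show ?thesis
    using regular_family_shrink[OF Q _ _ S(1), of n] graph_family_card_le_2
    by (force simp: graph_family_def)
qed

lemma base_size_Snr_eq:
  assumes "0 < r" "r = 1 \<or> r \<le> k" "2 * n \<le> k * (r + 1) + 2" "k * (r + 1) + 2 \<le> 2 * n + r"
  shows "base_size_Snr n r = k"
proof -
  obtain B where B: "is_base_Snr n r B" "card B \<le> k"
    using exists_regular_family_card[OF assms] is_base_Snr_of_regular_family by blast
  have "k \<le> card B'" if "is_base_Snr n r B'" for B'
  proof -
    have "k * (r + 1) < (card B' + 1) * (r + 1)"
      using is_base_Snr_card_lower_bound[OF that] assms(4) by (simp add: algebra_simps)
    then show ?thesis
      by (simp only: mult_less_cancel2) simp
  qed
  with B have "card B = k"
    by (simp add: le_antisym)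
  with B(1) \<open>\<And>B'. is_base_Snr n r B' \<Longrightarrow> k \<le> card B'\<close> show ?thesis
    unfolding base_size_Snr_def by (intro Least_equality) auto
qed

lemma ceiling_divide_of_nat_eq_iff:
  fixes a b k :: nat
  assumes "0 < b"
  shows "\<lceil>real a / real b\<rceil> = int k \<longleftrightarrow> a \<le> k * b \<and> k * b < a + b"
proof -
  have "\<lceil>real a / real b\<rceil> = int k \<longleftrightarrow> real k - 1 < real a / real b \<and> real a / real b \<le> real k"
    by (simp add: ceiling_eq_iff)
  also have "\<dots> \<longleftrightarrow> real (k * b) < real (a + b) \<and> real a \<le> real (k * b)"
    using assms by (simp add: field_simps)
  finally show ?thesis
    by (simp only: of_nat_less_iff of_nat_le_iff) auto
qed

lemma triangular_le_imp_le:
  fixes r n k :: nat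
  assumes "r * r + r \<le> 2 * n" "2 * n \<le> k * (r + 1) + 2"
  shows "r = 1 \<or> r \<le> k"
proof (rule ccontr)
  assume "\<not> (r = 1 \<or> r \<le> k)"
  then have "2 \<le> r" "k + 1 \<le> r"
    by auto
  from this(2) have "(k + 1) * (r + 1) \<le> r * (r + 1)"
    by (rule mult_le_mono1)
  with assms \<open>2 \<le> r\<close> show False
    by (simp add: algebra_simps)
qed

theorem corollary3p3:
  fixes n r :: nat
  assumes "n > 0" and "r > 0" and "real n \<ge> (real r ^ 2 + real r) / 2"
  shows "int (base_size_Snr n r) = \<lceil>(2 * real n - 2) / (real r + 1)\<rceil>"
proof -
  have ceil: "\<lceil>(2 * real n - 2) / (real r + 1)\<rceil> = \<lceil>real (2 * n - 2) / real (r + 1)\<rceil>"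
    using assms(1) by (simp add: of_nat_diff add.commute)
  have "0 \<le> real (2 * n - 2) / real (r + 1)"
    by simp
  then have "0 \<le> \<lceil>real (2 * n - 2) / real (r + 1)\<rceil>"
    by (simp only: zero_le_ceiling)
  then obtain k where k: "\<lceil>real (2 * n - 2) / real (r + 1)\<rceil> = int k"
    using nonneg_eq_int by blast
  then have window: "2 * n \<le> k * (r + 1) + 2" "k * (r + 1) + 2 \<le> 2 * n + r"
    using ceiling_divide_of_nat_eq_iff[of "r + 1" "2 * n - 2" k] assms(1) by auto
  have "real (r * r + r) \<le> real (2 * n)"
    using assms(3) by (simp add: power2_eq_square)
  then have "r * r + r \<le> 2 * n"
    by (simp only: of_nat_le_iff)
  then have "base_size_Snr n r = k"
    using window assms(2) triangular_le_imp_le by (intro base_size_Snr_eq) auto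
  with ceil k show ?thesis
    by simp
qed

end
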